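(* Let $\mathbb{F}$ be a field of characteristic zero and $n\ge1$. Let $L^n_{\mathbb{F}}$ be the set of all $A\in M_n(\mathbb{F})$ such that the Schur map $S_A\colon M_n(\mathbb{F})\to M_n(\mathbb{F})$, $S_A(B)=A\circ B$, is nonzero and multiplicative, and let $G^n_{\mathbb{F}}=\{A\in M_n(\mathbb{F}) : \text{there is }\lambda\in\mathbb{F}^{*}\text{ with } a_{ij}=\lambda^{j-i}\text{ for all } i,j\}$. Then $L^n_{\mathbb{F}}$, equipped with the Schur product, is an abelian group, and $G^n_{\mathbb{F}}$ is a subgroup of it consisting of Toeplitz matrices.
   Context: $A\circ B=(a_{ij}b_{ij})$ is the entrywise (Schur) product; $\mathbb{F}^*=\mathbb{F}\setminus\{0\}$. A Toeplitz matrix is one with $a_{ij}=a_{i+1,j+1}$ whenever both are defined. *)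

theory Defs
  imports "Jordan_Normal_Form.Matrix" "HOL-Algebra.Group"
begin

definition schur_prod :: "'a::times mat \<Rightarrow> 'a mat \<Rightarrow> 'a mat" where
  "schur_prod A B = mat (dim_row A) (dim_col A) (\<lambda>(i,j). A $$ (i,j) * B $$ (i,j))"

definition schur_map_nonzero :: "nat \<Rightarrow> 'a::field mat \<Rightarrow> bool" where
  "schur_map_nonzero n A \<longleftrightarrow> (\<exists>B \<in> carrier_mat n n. schur_prod A B \<noteq> 0\<^sub>m n n)"

definition schur_map_multiplicative :: "nat \<Rightarrow> 'a::field mat \<Rightarrow> bool" where
  "schur_map_multiplicative n A \<longleftrightarrow>
     (\<forall>B \<in> carrier_mat n n. \<forall>C \<in> carrier_mat n n.
        schur_prod A (B * C) = schur_prod A B * schur_prod A C)"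

definition L_set :: "nat \<Rightarrow> 'a::field mat set" where
  "L_set n = {A \<in> carrier_mat n n. schur_map_nonzero n A \<and> schur_map_multiplicative n A}"

definition G_set :: "nat \<Rightarrow> 'a::field mat set" where
  "G_set n = {A \<in> carrier_mat n n. \<exists>c::'a. c \<noteq> 0 \<and>
      (\<forall>i<n. \<forall>j<n. A $$ (i,j) = c powi (int j - int i))}"

definition toeplitz :: "'a mat \<Rightarrow> bool" where
  "toeplitz A \<longleftrightarrow> (\<forall>i j. Suc i < dim_row A \<and> Suc j < dim_col A \<longrightarrow>
      A $$ (i,j) = A $$ (Suc i, Suc j))"

definition schur_struct :: "nat \<Rightarrow> 'a::field mat monoid" where
  "schur_struct n = \<lparr>carrier = L_set n, monoid.mult = schur_prod,
                     one = mat n n (\<lambda>_. 1)\<rparr>"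

end

theory Submission
  imports Defs
begin

text \<open>Applied to matrix units, E_ik E_kj = E_ij, multiplicativity of the Schur map S_A
  forces the cocycle identity a_ij = a_ik a_kj; conversely, under that identity the factor a_ij
  splits over each term b_ik c_kj of (BC)_ij. A cocycle with one nonzero entry has a_ii = 1 and
  a_ij a_ji = 1, so L^n consists of the cocycles without zero entries, a group under the Schur
  product with entrywise inverses. For a_ij = \<lambda>^(j-i) the cocycle identity is the exponent law,
  and the entries depend only on j - i.\<close>

definition cocycle_mat :: "nat \<Rightarrow> 'a::times mat \<Rightarrow> bool" where
  "cocycle_mat n A \<longleftrightarrow> (\<forall>i<n. \<forall>j<n. \<forall>k<n. A $$ (i,j) = A $$ (i,k) * A $$ (k,j))"

lemma cocycle_matI:
  "(\<And>i j k. i < n \<Longrightarrow> j < n \<Longrightarrow> k < n \<Longrightarrow> A $$ (i,j) = A $$ (i,k) * A $$ (k,j))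
   \<Longrightarrow> cocycle_mat n A"
  unfolding cocycle_mat_def by blast

lemma cocycle_matD:
  "cocycle_mat n A \<Longrightarrow> i < n \<Longrightarrow> j < n \<Longrightarrow> k < n \<Longrightarrow> A $$ (i,j) = A $$ (i,k) * A $$ (k,j)"
  unfolding cocycle_mat_def by blast

definition mat_unit :: "nat \<Rightarrow> nat \<Rightarrow> nat \<Rightarrow> 'a::zero_neq_one mat" where
  "mat_unit n i j = mat n n (\<lambda>(a,b). if a = i \<and> b = j then 1 else 0)"

lemma mat_unit_carrier [simp]: "mat_unit n i j \<in> carrier_mat n n"
  by (simp add: mat_unit_def)

lemma mat_unit_mult:
  assumes "k < n"
  shows "mat_unit n i k * mat_unit n k j = (mat_unit n i j :: 'a::semiring_1 mat)"
proof (rule eq_matI)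
  fix a b assume "a < dim_row (mat_unit n i j :: 'a mat)" "b < dim_col (mat_unit n i j :: 'a mat)"
  then have ab: "a < n" "b < n" by (simp_all add: mat_unit_def)
  have "(mat_unit n i k * mat_unit n k j :: 'a mat) $$ (a,b)
        = (\<Sum>l\<in>{0..<n}. (if a = i \<and> l = k then 1 else 0) * (if l = k \<and> b = j then 1 else 0))"
    using ab by (simp add: mat_unit_def scalar_prod_def)
  also have "\<dots> = (\<Sum>l\<in>{0..<n}. if l = k then (if a = i \<and> b = j then 1 else 0) else 0)"
    by (rule sum.cong) auto
  also have "\<dots> = mat_unit n i j $$ (a,b)"
    using ab assms by (simp add: mat_unit_def)
  finally show "(mat_unit n i k * mat_unit n k j :: 'a mat) $$ (a,b) = mat_unit n i j $$ (a,b)" .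
qed (simp_all add: mat_unit_def)

lemma schur_prod_index [simp]:
  "i < dim_row A \<Longrightarrow> j < dim_col A \<Longrightarrow> schur_prod A B $$ (i,j) = A $$ (i,j) * B $$ (i,j)"
  by (simp add: schur_prod_def)

lemma dim_schur_prod [simp]:
  "dim_row (schur_prod A B) = dim_row A" "dim_col (schur_prod A B) = dim_col A"
  by (simp_all add: schur_prod_def)

lemma mult_smult_smult_mat:
  assumes "A \<in> carrier_mat nr n" "B \<in> carrier_mat n nc"
  shows "(a \<cdot>\<^sub>m A) * (b \<cdot>\<^sub>m B) = (a * b :: 'a::comm_semiring_0) \<cdot>\<^sub>m (A * B)"
proof -
  have "(a \<cdot>\<^sub>m A) * (b \<cdot>\<^sub>m B) = a \<cdot>\<^sub>m (A * (b \<cdot>\<^sub>m B))"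
    using assms by (intro mult_smult_assoc_mat) auto
  also have "\<dots> = a \<cdot>\<^sub>m (b \<cdot>\<^sub>m (A * B))"
    using assms by (simp add: mult_smult_distrib)
  also have "\<dots> = (a * b) \<cdot>\<^sub>m (A * B)"
    by (intro eq_matI) (simp_all add: mult.assoc)
  finally show ?thesis .
qed

lemma schur_prod_mat_unit:
  assumes "A \<in> carrier_mat n n" "i < n" "j < n"
  shows "schur_prod A (mat_unit n i j) = A $$ (i,j) \<cdot>\<^sub>m (mat_unit n i j :: 'a::semiring_1 mat)"
  using assms by (auto simp: mat_unit_def intro!: eq_matI)

lemma schur_map_multiplicative_iff_cocycle:
  fixes A :: "'a::field mat"
  assumes A: "A \<in> carrier_mat n n"
  shows "schur_map_multiplicative n A \<longleftrightarrow> cocycle_mat n A"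
proof
  assume mult: "schur_map_multiplicative n A"
  show "cocycle_mat n A"
  proof (rule cocycle_matI)
    fix i j k assume ijk: "i < n" "j < n" "k < n"
    have "A $$ (i,j) \<cdot>\<^sub>m mat_unit n i j = schur_prod A (mat_unit n i k * mat_unit n k j)"
      using A ijk by (simp add: mat_unit_mult schur_prod_mat_unit)
    also have "\<dots> = schur_prod A (mat_unit n i k) * schur_prod A (mat_unit n k j)"
      using mult by (simp add: schur_map_multiplicative_def)
    also have "\<dots> = A $$ (i,k) \<cdot>\<^sub>m mat_unit n i k * (A $$ (k,j) \<cdot>\<^sub>m mat_unit n k j)"
      using A ijk by (simp add: schur_prod_mat_unit)
    also have "\<dots> = (A $$ (i,k) * A $$ (k,j)) \<cdot>\<^sub>m (mat_unit n i k * mat_unit n k j :: 'a mat)"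
      by (rule mult_smult_smult_mat[of _ n n _ n]) simp_all
    also have "\<dots> = (A $$ (i,k) * A $$ (k,j)) \<cdot>\<^sub>m (mat_unit n i j :: 'a mat)"
      using ijk by (simp add: mat_unit_mult)
    finally have "(A $$ (i,j) \<cdot>\<^sub>m mat_unit n i j) $$ (i,j)
                  = ((A $$ (i,k) * A $$ (k,j)) \<cdot>\<^sub>m (mat_unit n i j :: 'a mat)) $$ (i,j)"
      by simp
    then show "A $$ (i,j) = A $$ (i,k) * A $$ (k,j)"
      using ijk by (simp add: mat_unit_def)
  qed
next
  assume cocycle: "cocycle_mat n A"
  show "schur_map_multiplicative n A" unfolding schur_map_multiplicative_def
  proof (intro ballI eq_matI)
    fix B C i j assume B: "B \<in> carrier_mat n n" and C: "C \<in> carrier_mat n n"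
      and "i < dim_row (schur_prod A B * schur_prod A C)" "j < dim_col (schur_prod A B * schur_prod A C)"
    with A have ij: "i < n" "j < n" by auto
    have "schur_prod A (B * C) $$ (i,j) = (\<Sum>k\<in>{0..<n}. A $$ (i,j) * (B $$ (i,k) * C $$ (k,j)))"
      using A B C ij by (simp add: scalar_prod_def sum_distrib_left)
    also have "\<dots> = (\<Sum>k\<in>{0..<n}. (A $$ (i,k) * B $$ (i,k)) * (A $$ (k,j) * C $$ (k,j)))"
    proof (rule sum.cong)
      fix k assume "k \<in> {0..<n}"
      then have "A $$ (i,j) = A $$ (i,k) * A $$ (k,j)"
        using cocycle_matD[OF cocycle ij] by simp
      then show "A $$ (i,j) * (B $$ (i,k) * C $$ (k,j)) = (A $$ (i,k) * B $$ (i,k)) * (A $$ (k,j) * C $$ (k,j))"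
        by (simp add: mult_ac)
    qed simp
    also have "\<dots> = (schur_prod A B * schur_prod A C) $$ (i,j)"
      using A B C ij by (simp add: scalar_prod_def)
    finally show "schur_prod A (B * C) $$ (i,j) = (schur_prod A B * schur_prod A C) $$ (i,j)" .
  qed (use A in auto)
qed

lemma cocycle_mat_nonzero_entries:
  fixes A :: "'a::field mat"
  assumes cocycle: "cocycle_mat n A" and "i < n" "j < n" "A $$ (i,j) \<noteq> 0" "p < n" "q < n"
  shows "A $$ (p,q) \<noteq> 0"
proof -
  note fac = cocycle_matD[OF cocycle]
  have "A $$ (i,p) \<noteq> 0" using fac[of i j p] assms by auto
  moreover have "A $$ (i,p) = A $$ (i,p) * A $$ (p,p)" using fac[of i p p] assms by simp
  ultimately have "A $$ (p,p) = 1" by simp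
  with fac[of p p q] assms show ?thesis by auto
qed

lemma schur_map_nonzero_iff:
  assumes "A \<in> carrier_mat n n"
  shows "schur_map_nonzero n A \<longleftrightarrow> (\<exists>i<n. \<exists>j<n. A $$ (i,j) \<noteq> (0::'a::field))"
proof
  assume "schur_map_nonzero n A"
  then obtain B where "B \<in> carrier_mat n n" "schur_prod A B \<noteq> 0\<^sub>m n n"
    by (auto simp: schur_map_nonzero_def)
  show "\<exists>i<n. \<exists>j<n. A $$ (i,j) \<noteq> 0"
  proof (rule ccontr)
    assume "\<not> (\<exists>i<n. \<exists>j<n. A $$ (i,j) \<noteq> 0)"
    with assms have "schur_prod A B = 0\<^sub>m n n"
      by (intro eq_matI) auto
    with \<open>schur_prod A B \<noteq> 0\<^sub>m n n\<close> show False ..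
  qed
next
  assume "\<exists>i<n. \<exists>j<n. A $$ (i,j) \<noteq> 0"
  then obtain i j where "i < n" "j < n" "A $$ (i,j) \<noteq> 0" by blast
  with assms have "schur_prod A (mat_unit n i j) $$ (i,j) \<noteq> 0"
    by (simp add: mat_unit_def)
  with \<open>i < n\<close> \<open>j < n\<close> show "schur_map_nonzero n A"
    unfolding schur_map_nonzero_def by (metis index_zero_mat(1) mat_unit_carrier)
qed

lemma L_set_eq:
  assumes "n \<ge> 1"
  shows "L_set n = {A \<in> carrier_mat n n. cocycle_mat n A \<and> (\<forall>i<n. \<forall>j<n. A $$ (i,j) \<noteq> (0::'a::field))}"
proof -
  have "(\<exists>i<n. \<exists>j<n. A $$ (i,j) \<noteq> 0) \<longleftrightarrow> (\<forall>i<n. \<forall>j<n. A $$ (i,j) \<noteq> 0)"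
    if "cocycle_mat n A" for A :: "'a mat"
  proof
    assume "\<exists>i<n. \<exists>j<n. A $$ (i,j) \<noteq> 0"
    then show "\<forall>i<n. \<forall>j<n. A $$ (i,j) \<noteq> 0"
      using cocycle_mat_nonzero_entries[OF that] by blast
  next
    assume "\<forall>i<n. \<forall>j<n. A $$ (i,j) \<noteq> 0"
    moreover have "0 < n" using assms by simp
    ultimately show "\<exists>i<n. \<exists>j<n. A $$ (i,j) \<noteq> 0" by blast
  qed
  then show ?thesis
    by (auto simp: L_set_def schur_map_nonzero_iff schur_map_multiplicative_iff_cocycle)
qed

lemma cocycle_mat_schur_prod:
  fixes A B :: "'a::ab_semigroup_mult mat"
  assumes "A \<in> carrier_mat n n" "cocycle_mat n A" "cocycle_mat n B"
  shows "cocycle_mat n (schur_prod A B)"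
proof (rule cocycle_matI)
  fix i j k assume ijk: "i < n" "j < n" "k < n"
  have "A $$ (i,j) * B $$ (i,j) = (A $$ (i,k) * B $$ (i,k)) * (A $$ (k,j) * B $$ (k,j))"
    unfolding cocycle_matD[OF assms(2) ijk] cocycle_matD[OF assms(3) ijk] by (simp add: mult_ac)
  with assms(1) ijk show "schur_prod A B $$ (i,j) = schur_prod A B $$ (i,k) * schur_prod A B $$ (k,j)"
    by simp
qed

lemma cocycle_mat_map_inverse:
  assumes "A \<in> carrier_mat n n" "cocycle_mat n (A :: 'a::field mat)"
  shows "cocycle_mat n (map_mat inverse A)"
proof (rule cocycle_matI)
  fix i j k assume ijk: "i < n" "j < n" "k < n"
  then show "map_mat inverse A $$ (i,j) = map_mat inverse A $$ (i,k) * map_mat inverse A $$ (k,j)"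
    using assms(1) by (simp add: cocycle_matD[OF assms(2) ijk] inverse_mult_distrib)
qed

lemma schur_prod_assoc:
  fixes A B C :: "'a::semigroup_mult mat"
  assumes "A \<in> carrier_mat n m" "B \<in> carrier_mat n m"
  shows "schur_prod (schur_prod A B) C = schur_prod A (schur_prod B C)"
  using assms
  by (auto simp: schur_prod_def mult.assoc intro!: eq_matI)

lemma schur_prod_comm:
  fixes A B :: "'a::ab_semigroup_mult mat"
  assumes "A \<in> carrier_mat n m" "B \<in> carrier_mat n m"
  shows "schur_prod A B = schur_prod B A"
  using assms
  by (auto simp: schur_prod_def mult.commute intro!: eq_matI)

lemma schur_prod_ones_left:
  "A \<in> carrier_mat n m \<Longrightarrow> schur_prod (mat n m (\<lambda>_. 1)) A = (A::'a::monoid_mult mat)"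
  by (auto intro!: eq_matI)

lemma schur_prod_map_inverse_left:
  assumes "A \<in> carrier_mat n m" "\<forall>i<n. \<forall>j<m. A $$ (i,j) \<noteq> (0::'a::field)"
  shows "schur_prod (map_mat inverse A) A = mat n m (\<lambda>_. 1)"
  using assms by (auto intro!: eq_matI)

lemma schur_struct_comm_group:
  assumes "n \<ge> 1"
  shows "comm_group (schur_struct n :: 'a::field mat monoid)"
  unfolding schur_struct_def
proof (rule comm_groupI, unfold partial_object.simps monoid.simps L_set_eq[OF assms] mem_Collect_eq)
  fix A :: "'a mat"
  assume A: "A \<in> carrier_mat n n \<and> cocycle_mat n A \<and> (\<forall>i<n. \<forall>j<n. A $$ (i,j) \<noteq> 0)"
  then show "schur_prod (mat n n (\<lambda>_. 1)) A = A"
    by (simp add: schur_prod_ones_left)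
  show "\<exists>B \<in> {A \<in> carrier_mat n n. cocycle_mat n A \<and> (\<forall>i<n. \<forall>j<n. A $$ (i,j) \<noteq> 0)}.
          schur_prod B A = mat n n (\<lambda>_. 1)"
    using A by (intro bexI[of _ "map_mat inverse A"])
      (auto simp: schur_prod_map_inverse_left cocycle_mat_map_inverse)
qed (auto simp: schur_prod_assoc schur_prod_comm intro: cocycle_mat_schur_prod cocycle_matI)

lemma schur_struct_inv:
  assumes "n \<ge> 1" "A \<in> carrier (schur_struct n :: 'a::field mat monoid)"
  shows "inv\<^bsub>schur_struct n\<^esub> A = map_mat inverse A"
proof -
  interpret comm_group "schur_struct n :: 'a mat monoid"
    by (rule schur_struct_comm_group[OF assms(1)])
  from assms have A: "A \<in> carrier_mat n n" "cocycle_mat n A" "\<forall>i<n. \<forall>j<n. A $$ (i,j) \<noteq> 0"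
    by (simp_all add: schur_struct_def L_set_eq)
  show ?thesis
  proof (rule inv_equality)
    show "map_mat inverse A \<otimes>\<^bsub>schur_struct n\<^esub> A = \<one>\<^bsub>schur_struct n\<^esub>"
      using A by (simp add: schur_struct_def schur_prod_map_inverse_left)
    show "map_mat inverse A \<in> carrier (schur_struct n)"
      using A by (simp add: schur_struct_def L_set_eq[OF assms(1)] cocycle_mat_map_inverse)
  qed (rule assms(2))
qed

definition geometric_mat :: "nat \<Rightarrow> 'a::field \<Rightarrow> 'a mat" where
  "geometric_mat n c = mat n n (\<lambda>(i,j). c powi (int j - int i))"

lemma G_set_eq: "G_set n = geometric_mat n ` {c. c \<noteq> 0}"
proof
  show "G_set n \<subseteq> geometric_mat n ` {c. c \<noteq> 0}"
  proof
    fix A assume "A \<in> G_set n"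
    then obtain c where c: "c \<noteq> 0" "A \<in> carrier_mat n n"
      "\<forall>i<n. \<forall>j<n. A $$ (i,j) = c powi (int j - int i)"
      by (auto simp: G_set_def)
    then have "A = geometric_mat n c"
      by (intro eq_matI) (auto simp: geometric_mat_def)
    with c(1) show "A \<in> geometric_mat n ` {c. c \<noteq> 0}" by blast
  qed
  show "geometric_mat n ` {c. c \<noteq> 0} \<subseteq> G_set n"
    by (auto simp: G_set_def geometric_mat_def)
qed

lemma cocycle_geometric_mat:
  assumes "c \<noteq> 0"
  shows "cocycle_mat n (geometric_mat n c)"
  using assms by (intro cocycle_matI) (simp add: geometric_mat_def power_int_add[symmetric])

lemma geometric_mat_in_L_set:
  assumes "n \<ge> 1" "c \<noteq> 0"
  shows "geometric_mat n c \<in> L_set n"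
  using assms cocycle_geometric_mat[OF assms(2)] by (simp add: L_set_eq geometric_mat_def)

lemma schur_prod_geometric_mat:
  "schur_prod (geometric_mat n c) (geometric_mat n d) = geometric_mat n (c * d)"
  by (auto simp: geometric_mat_def power_int_mult_distrib intro!: eq_matI)

lemma map_inverse_geometric_mat:
  "map_mat inverse (geometric_mat n c) = geometric_mat n (inverse c)"
  by (auto simp: geometric_mat_def power_int_inverse intro!: eq_matI)

lemma toeplitz_geometric_mat: "toeplitz (geometric_mat n c)"
  by (simp add: toeplitz_def geometric_mat_def)

lemma G_set_subgroup:
  assumes "n \<ge> 1"
  shows "subgroup (G_set n) (schur_struct n :: 'a::field mat monoid)"
proof -
  interpret comm_group "schur_struct n :: 'a mat monoid"
    by (rule schur_struct_comm_group[OF assms])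
  show ?thesis
  proof (rule subgroupI, unfold G_set_eq)
    show "geometric_mat n ` {c. c \<noteq> 0} \<subseteq> carrier (schur_struct n)"
      using assms by (auto simp: schur_struct_def geometric_mat_in_L_set)
    then show "\<And>A. A \<in> geometric_mat n ` {c. c \<noteq> 0} \<Longrightarrow>
        inv\<^bsub>schur_struct n\<^esub> A \<in> geometric_mat n ` {c. c \<noteq> 0}"
      using assms by (auto simp: schur_struct_inv map_inverse_geometric_mat)
    show "\<And>A B. A \<in> geometric_mat n ` {c. c \<noteq> 0} \<Longrightarrow> B \<in> geometric_mat n ` {c. c \<noteq> 0} \<Longrightarrow>
        A \<otimes>\<^bsub>schur_struct n\<^esub> B \<in> geometric_mat n ` {c. c \<noteq> 0}"
      by (auto simp: schur_struct_def schur_prod_geometric_mat)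
    have "geometric_mat n 1 \<in> geometric_mat n ` {c. c \<noteq> 0}" by simp
    then show "geometric_mat n ` {c. c \<noteq> 0} \<noteq> {}" by blast
  qed
qed

theorem proposition3p2:
  fixes n :: nat
  assumes "n \<ge> 1"
  shows "comm_group (schur_struct n :: 'a::field_char_0 mat monoid)
       \<and> subgroup (G_set n) (schur_struct n :: 'a mat monoid)
       \<and> (\<forall>A \<in> (G_set n :: 'a mat set). toeplitz A)"
  using schur_struct_comm_group[OF assms] G_set_subgroup[OF assms]
  by (auto simp: G_set_eq toeplitz_geometric_mat)

end
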